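(* (i) If there exists a function $m:\Gamma\to(0,\infty)$ such that $\beta_x m(x)\ge \lambda_x m(x')+\sum_{y\in N_x}\lambda_y m(y)$ for every $x\in\Gamma$, then $(Jv,v)\ge0$ for all $v\in\mathcal F(\Gamma)$. (ii) Conversely, if $(Jv,v)\ge 0$ for all $v\in\mathcal F(\Gamma)$, then there exists a function $m:\Gamma\to(0,\infty)$ such that $\beta_x m(x)= \lambda_x m(x')+\sum_{y\in N_x}\lambda_y m(y)$ for every $x\in\Gamma$.
   Context: Let $\Gamma$ be an infinite connected tree whose vertices are arranged in levels $\ell(x)\in\{0,1,2,\dots\}$: every vertex $x$ is adjacent to exactly one vertex $x'$ with $\ell(x')=\ell(x)+1$; for $\ell(x)\ge 1$ the set $N_x=\{y:\ y'=x\}$ of neighbours of $x$ on level $\ell(x)-1$ is finite and nonempty; $N_x=\emptyset$ if $\ell(x)=0$; there are no other edges. Fix $\lambda_x>0$, $\beta_x\in\mathbb R$. The Jacobi matrix $J$ acts on functions $v:\Gamma\to\mathbb C$ by $(Jv)(x)=\lambda_x v(x')+\beta_x v(x)+\sum_{y\in N_x}\lambda_y v(y)$. $\mathcal F(\Gamma)$ denotes the finitely supported functions on $\Gamma$, and $(u,v)=\sum_{x\in\Gamma}u(x)\overline{v(x)}$. *)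

theory Defs
  imports Complex_Main "HOL-Library.Complex_Order"
begin

text \<open>The tree Gamma is the whole type 'a. Each vertex x has the unique upper
neighbour p x (written x' in the paper), lev is the level function.
N_x = {y. p y = x}.\<close>

definition level_tree :: "('a \<Rightarrow> 'a) \<Rightarrow> ('a \<Rightarrow> nat) \<Rightarrow> bool" where
  "level_tree p lev \<longleftrightarrow>
     infinite (UNIV :: 'a set) \<and>
     (\<forall>x. lev (p x) = lev x + 1) \<and>
     (\<forall>x. lev x \<ge> 1 \<longrightarrow> finite {y. p y = x} \<and> {y. p y = x} \<noteq> {}) \<and>
     (\<forall>x. lev x = 0 \<longrightarrow> {y. p y = x} = {}) \<and>
     (\<forall>x y. \<exists>n k. (p ^^ n) x = (p ^^ k) y)"

definition jacobi :: "('a \<Rightarrow> 'a) \<Rightarrow> ('a \<Rightarrow> real) \<Rightarrow> ('a \<Rightarrow> real) \<Rightarrow> ('a \<Rightarrow> complex) \<Rightarrow> 'a \<Rightarrow> complex" where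
  "jacobi p lam beta v x =
     complex_of_real (lam x) * v (p x) + complex_of_real (beta x) * v x
     + (\<Sum>y\<in>{y. p y = x}. complex_of_real (lam y) * v y)"

text \<open>(u,w) = sum over x of u(x) * conj(w(x)); for w finitely supported the sum
is over the support of w.\<close>
definition fin_supp :: "('a \<Rightarrow> complex) \<Rightarrow> bool" where
  "fin_supp v \<longleftrightarrow> finite {x. v x \<noteq> 0}"

definition jform :: "('a \<Rightarrow> 'a) \<Rightarrow> ('a \<Rightarrow> real) \<Rightarrow> ('a \<Rightarrow> real) \<Rightarrow> ('a \<Rightarrow> complex) \<Rightarrow> complex" where
  "jform p lam beta v = (\<Sum>x\<in>{x. v x \<noteq> 0}. jacobi p lam beta v x * cnj (v x))"

end

theory Submission
  imports Defs
begin

text \<open>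
Sufficiency: by weighted AM-GM each edge term \<open>2 \<lambda>(x) Re (v(x) cnj v(x'))\<close> is at least
\<open>- \<lambda>(x) (m(x')/m(x)) |v(x)|\<^sup>2 - \<lambda>(x) (m(x)/m(x')) |v(x')|\<^sup>2\<close>. Collecting the second
terms at the parent turns \<open>(Jv,v)\<close> into a sum of
\<open>|v(x)|\<^sup>2/m(x) (\<beta>(x) m(x) - \<lambda>(x) m(x') - \<Sum>\<^bsub>y\<in>N\<^sub>x\<^esub> \<lambda>(y) m(y)) \<ge> 0\<close>.

Necessity: eliminate \<open>J\<close> from the leaves upwards. The pivots
\<open>d(x) = \<beta>(x) - \<Sum>\<^bsub>y\<in>N\<^sub>x\<^esub> \<lambda>(y) r(y)\<close>, with \<open>r(x) = \<lambda>(x) / d(x)\<close>, are defined by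
recursion on the level. Each pivot is positive: the vector \<open>w\<close> supported on the finite subtree
below \<open>x\<close> and on \<open>x'\<close>, with \<open>Jw = 0\<close> strictly below \<open>x\<close>, \<open>w(x) = 1\<close> and \<open>w(x') = s\<close>, has
\<open>(Jw,w) = d(x) + 2 \<lambda>(x) s + \<beta>(x') s\<^sup>2\<close>, which is nonnegative for all real \<open>s\<close> only if
\<open>d(x) > 0\<close>. Hence \<open>r > 0\<close>, and prescribing \<open>m(x) / m(x') = r(x)\<close> along the connected tree
gives the solution \<open>m\<close>.
\<close>

lemma sum_parent_eq_sum_children:
  fixes f :: "'a \<Rightarrow> 'a \<Rightarrow> 'b::comm_monoid_add"
  assumes "finite S" and "\<And>y. y \<in> S \<Longrightarrow> p y \<notin> S \<Longrightarrow> f y (p y) = 0"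
  shows "(\<Sum>y\<in>S. f y (p y)) = (\<Sum>x\<in>S. \<Sum>y\<in>{y\<in>S. p y = x}. f y x)"
proof -
  have "(\<Sum>x\<in>S. \<Sum>y\<in>{y\<in>S. p y = x}. f y x) = (\<Sum>x\<in>S. \<Sum>y\<in>S. if p y = x then f y x else 0)"
    using assms(1) by (simp add: sum.inter_filter)
  also have "\<dots> = (\<Sum>y\<in>S. \<Sum>x\<in>S. if p y = x then f y x else 0)"
    by (rule sum.swap)
  also have "\<dots> = (\<Sum>y\<in>S. f y (p y))"
    using assms by (auto intro: sum.cong)
  finally show ?thesis by simp
qed

lemma sum_parent_le_sum_children:
  fixes h :: "'a \<Rightarrow> 'a \<Rightarrow> real"
  assumes "finite S" and "\<And>x. finite {y. p y = x}" and "\<And>y x. h y x \<ge> 0"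
    and "\<And>y. y \<in> S \<Longrightarrow> p y \<notin> S \<Longrightarrow> h y (p y) = 0"
  shows "(\<Sum>y\<in>S. h y (p y)) \<le> (\<Sum>x\<in>S. \<Sum>y | p y = x. h y x)"
proof -
  have "(\<Sum>y\<in>S. h y (p y)) = (\<Sum>x\<in>S. \<Sum>y\<in>{y\<in>S. p y = x}. h y x)"
    using assms(1,4) by (rule sum_parent_eq_sum_children)
  also have "\<dots> \<le> (\<Sum>x\<in>S. \<Sum>y | p y = x. h y x)"
    using assms(2,3) by (intro sum_mono sum_mono2) auto
  finally show ?thesis .
qed

lemma two_mult_le_weighted_squares:
  fixes a b q :: real
  assumes "q > 0"
  shows "2 * a * b \<le> q * a\<^sup>2 + b\<^sup>2 / q"
proof -
  have "0 \<le> (q * a - b)\<^sup>2 / q"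
    using assms by simp
  also have "\<dots> = q * a\<^sup>2 + b\<^sup>2 / q - 2 * a * b"
    using assms by (simp add: field_simps power2_eq_square)
  finally show ?thesis by simp
qed

lemma quadratic_nonneg_imp_const_pos:
  fixes c l b :: real
  assumes "l > 0" and nonneg: "\<And>s. c + 2 * l * s + b * s\<^sup>2 \<ge> 0"
  shows "c > 0"
proof (rule ccontr)
  assume "\<not> c > 0"
  define t where "t = \<bar>b\<bar> + 1"
  have "t > 0" "b \<le> t - 1"
    by (auto simp: t_def)
  have "0 \<le> t\<^sup>2 * (c + 2 * l * (- l / t) + b * (- l / t)\<^sup>2)"
    by (intro mult_nonneg_nonneg zero_le_power2 nonneg)
  also have "\<dots> = c * t\<^sup>2 - l\<^sup>2 * t + (b - t) * l\<^sup>2"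
    using \<open>t > 0\<close> by (simp add: field_simps power2_eq_square)
  also have "\<dots> < 0"
  proof -
    have "c * t\<^sup>2 \<le> 0" using \<open>\<not> c > 0\<close> by (simp add: mult_nonpos_nonneg)
    moreover have "(b - t) * l\<^sup>2 \<le> 0" using \<open>b \<le> t - 1\<close> by (simp add: mult_nonpos_nonneg)
    moreover have "l\<^sup>2 * t > 0" using \<open>l > 0\<close> \<open>t > 0\<close> by simp
    ultimately show ?thesis by linarith
  qed
  finally show False by simp
qed

section \<open>Supersolutions make the form nonnegative\<close>

lemma jform_eq_edge_sum:
  assumes children: "\<And>x. finite {y. p y = x}" and "fin_supp v"
  shows "jform p lam beta v = of_real (\<Sum>x | v x \<noteq> 0.
           beta x * (cmod (v x))\<^sup>2 + 2 * lam x * Re (v x * cnj (v (p x))))"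
proof -
  define S where "S = {x. v x \<noteq> 0}"
  have "finite S" using \<open>fin_supp v\<close> by (simp add: fin_supp_def S_def)
  define g where "g y x = complex_of_real (lam y) * v y * cnj (v x)" for y x
  have children_in_S: "(\<Sum>y | p y = x. g y x) = (\<Sum>y\<in>{y\<in>S. p y = x}. g y x)" for x
    by (rule sum.mono_neutral_right) (auto simp: children g_def S_def)
  have "jform p lam beta v = (\<Sum>x\<in>S. complex_of_real (lam x) * v (p x) * cnj (v x)
          + complex_of_real (beta x) * v x * cnj (v x)) + (\<Sum>x\<in>S. \<Sum>y | p y = x. g y x)"
    unfolding jform_def jacobi_def S_def[symmetric] g_def
    by (simp add: sum.distrib sum_distrib_left sum_distrib_right algebra_simps)
  also have "(\<Sum>x\<in>S. \<Sum>y | p y = x. g y x) = (\<Sum>x\<in>S. g x (p x))"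
    unfolding children_in_S
    by (rule sum_parent_eq_sum_children[symmetric]) (use \<open>finite S\<close> in \<open>auto simp: g_def S_def\<close>)
  also have "(\<Sum>x\<in>S. complex_of_real (lam x) * v (p x) * cnj (v x)
               + complex_of_real (beta x) * v x * cnj (v x)) + (\<Sum>x\<in>S. g x (p x))
           = (\<Sum>x\<in>S. of_real (beta x * (cmod (v x))\<^sup>2 + 2 * lam x * Re (v x * cnj (v (p x)))))"
    unfolding sum.distrib[symmetric] cmod_power2
    by (intro sum.cong) (simp_all add: g_def complex_eq_iff algebra_simps power2_eq_square)
  finally show ?thesis
    by (simp add: S_def)
qed

lemma jform_nonneg_of_supersolution:
  fixes m :: "'a \<Rightarrow> real"
  assumes children: "\<And>x. finite {y. p y = x}" and lam_nonneg: "\<And>x. lam x \<ge> 0"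
    and m_pos: "\<And>x. m x > 0"
    and super: "\<And>x. beta x * m x \<ge> lam x * m (p x) + (\<Sum>y | p y = x. lam y * m y)"
    and "fin_supp v"
  shows "jform p lam beta v \<ge> 0"
proof -
  define S where "S = {x. v x \<noteq> 0}"
  have "finite S" using \<open>fin_supp v\<close> by (simp add: fin_supp_def S_def)
  define a where "a x = cmod (v x)" for x
  define h where "h y x = lam y * (m y / m x) * (a x)\<^sup>2" for y x
  have edge: "2 * lam x * Re (v x * cnj (v (p x)))
                \<ge> - (lam x * (m (p x) / m x) * (a x)\<^sup>2 + h x (p x))" for x
  proof -
    have "- Re (v x * cnj (v (p x))) \<le> a x * a (p x)"
      using abs_Re_le_cmod[of "v x * cnj (v (p x))"] by (simp add: a_def norm_mult)
    moreover have "2 * a x * a (p x) \<le> (m (p x) / m x) * (a x)\<^sup>2 + (a (p x))\<^sup>2 / (m (p x) / m x)"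
      using m_pos by (intro two_mult_le_weighted_squares) simp
    moreover have "(a (p x))\<^sup>2 / (m (p x) / m x) = (m x / m (p x)) * (a (p x))\<^sup>2"
      by simp
    ultimately have "- 2 * Re (v x * cnj (v (p x))) \<le> (m (p x) / m x) * (a x)\<^sup>2 + (m x / m (p x)) * (a (p x))\<^sup>2"
      by linarith
    then have "lam x * (- 2 * Re (v x * cnj (v (p x))))
        \<le> lam x * ((m (p x) / m x) * (a x)\<^sup>2 + (m x / m (p x)) * (a (p x))\<^sup>2)"
      using lam_nonneg by (intro mult_left_mono) auto
    then show ?thesis by (simp add: h_def algebra_simps)
  qed
  have "h y x \<ge> 0" for y x
    using lam_nonneg[of y] m_pos[of y] m_pos[of x] by (simp add: h_def)
  then have "(\<Sum>x\<in>S. h x (p x)) \<le> (\<Sum>x\<in>S. \<Sum>y | p y = x. h y x)"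
    using \<open>finite S\<close> children by (intro sum_parent_le_sum_children) (auto simp: h_def a_def S_def)
  also have "\<dots> = (\<Sum>x\<in>S. (a x)\<^sup>2 / m x * (\<Sum>y | p y = x. lam y * m y))"
    by (simp add: h_def sum_distrib_left algebra_simps)
  finally have children_bound: "(\<Sum>x\<in>S. h x (p x)) \<le> \<dots>" .
  have "0 \<le> (\<Sum>x\<in>S. (a x)\<^sup>2 / m x * (beta x * m x - lam x * m (p x) - (\<Sum>y | p y = x. lam y * m y)))"
    using m_pos super by (intro sum_nonneg mult_nonneg_nonneg divide_nonneg_pos) (auto simp: algebra_simps)
  also have "\<dots> = (\<Sum>x\<in>S. beta x * (a x)\<^sup>2 - lam x * (m (p x) / m x) * (a x)\<^sup>2)
                 - (\<Sum>x\<in>S. (a x)\<^sup>2 / m x * (\<Sum>y | p y = x. lam y * m y))"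
    unfolding sum_subtractf[symmetric] using m_pos
    by (intro sum.cong) (simp_all add: field_simps less_imp_neq[THEN not_sym])
  also have "\<dots> \<le> (\<Sum>x\<in>S. beta x * (a x)\<^sup>2 - lam x * (m (p x) / m x) * (a x)\<^sup>2 - h x (p x))"
    using children_bound by (simp add: sum_subtractf)
  also have "\<dots> \<le> (\<Sum>x\<in>S. beta x * (a x)\<^sup>2 + 2 * lam x * Re (v x * cnj (v (p x))))"
    using edge by (intro sum_mono) (smt (verit))
  finally show ?thesis
    using jform_eq_edge_sum[OF children \<open>fin_supp v\<close>]
    by (simp add: S_def a_def less_eq_complex_def)
qed

section \<open>Positivity of the form yields a positive solution\<close>

definition real_jacobi :: "('a \<Rightarrow> 'a) \<Rightarrow> ('a \<Rightarrow> real) \<Rightarrow> ('a \<Rightarrow> real) \<Rightarrow> ('a \<Rightarrow> real) \<Rightarrow> 'a \<Rightarrow> real" where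
  "real_jacobi p lam beta w x = lam x * w (p x) + beta x * w x + (\<Sum>y | p y = x. lam y * w y)"

lemma
  assumes "finite S" and "\<And>z. z \<notin> S \<Longrightarrow> w z = 0"
  shows fin_supp_of_real: "fin_supp (\<lambda>z. complex_of_real (w z))"
    and jform_of_real: "jform p lam beta (\<lambda>z. complex_of_real (w z))
                          = of_real (\<Sum>z\<in>S. real_jacobi p lam beta w z * w z)"
proof -
  have supp: "{z. complex_of_real (w z) \<noteq> 0} \<subseteq> S"
    using assms(2) by auto
  then show "fin_supp (\<lambda>z. complex_of_real (w z))"
    unfolding fin_supp_def using assms(1) by (rule finite_subset)
  have "jform p lam beta (\<lambda>z. complex_of_real (w z))
          = (\<Sum>z | complex_of_real (w z) \<noteq> 0. of_real (real_jacobi p lam beta w z * w z))"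
    unfolding jform_def jacobi_def real_jacobi_def by simp
  also have "\<dots> = (\<Sum>z\<in>S. of_real (real_jacobi p lam beta w z * w z))"
    by (rule sum.mono_neutral_left) (use assms supp in auto)
  finally show "jform p lam beta (\<lambda>z. complex_of_real (w z))
                  = of_real (\<Sum>z\<in>S. real_jacobi p lam beta w z * w z)"
    by simp
qed

locale jacobi_tree =
  fixes p :: "'a \<Rightarrow> 'a" and lev :: "'a \<Rightarrow> nat" and lam beta :: "'a \<Rightarrow> real"
  assumes tree: "level_tree p lev" and lam_pos: "\<And>x. lam x > 0"
begin

lemma lev_parent: "lev (p x) = lev x + 1"
  using tree unfolding level_tree_def by blast

lemma lev_funpow: "lev ((p ^^ k) z) = lev z + k"
  by (induction k) (auto simp: lev_parent)

lemma finite_children: "finite {y. p y = x}"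
  using tree unfolding level_tree_def by (cases "lev x = 0") auto

lemma no_children_level0: "lev x = 0 \<Longrightarrow> {y. p y = x} = {}"
  using tree unfolding level_tree_def by blast

lemma common_ancestor: "\<exists>n k. (p ^^ n) x = (p ^^ k) y"
  using tree unfolding level_tree_def by blast

lemma parent_neq_self: "p x \<noteq> x"
  using lev_parent[of x] by auto

primrec ratio_at :: "nat \<Rightarrow> 'a \<Rightarrow> real" where
  "ratio_at 0 x = lam x / beta x"
| "ratio_at (Suc n) x = lam x / (beta x - (\<Sum>y | p y = x. lam y * ratio_at n y))"

text \<open>\<open>ratio x\<close> is the quotient \<open>m x / m (p x)\<close> of the solution to be constructed.\<close>

definition ratio :: "'a \<Rightarrow> real" where
  "ratio x = ratio_at (lev x) x"

definition pivot :: "'a \<Rightarrow> real" where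
  "pivot x = beta x - (\<Sum>y | p y = x. lam y * ratio y)"

lemma ratio_eq: "ratio x = lam x / pivot x"
proof (cases "lev x")
  case 0
  then show ?thesis using no_children_level0[of x] by (simp add: ratio_def pivot_def)
next
  case (Suc n)
  have "lev y = n" if "p y = x" for y
    using that lev_parent[of y] Suc by simp
  then have "(\<Sum>y | p y = x. lam y * ratio y) = (\<Sum>y | p y = x. lam y * ratio_at n y)"
    by (intro sum.cong) (simp_all add: ratio_def)
  then show ?thesis using Suc by (simp add: ratio_def pivot_def)
qed

definition subtree :: "'a \<Rightarrow> 'a set" where
  "subtree x = {z. \<exists>k. (p ^^ k) z = x}"

lemma self_in_subtree: "x \<in> subtree x"
  unfolding subtree_def by (auto intro!: exI[where x = 0])

lemma child_in_subtree:
  assumes "p y \<in> subtree x"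
  shows "y \<in> subtree x"
proof -
  obtain k where "(p ^^ k) (p y) = x"
    using assms by (auto simp: subtree_def)
  then have "(p ^^ Suc k) y = x"
    by (simp add: funpow_Suc_right del: funpow.simps)
  then show ?thesis
    unfolding subtree_def by blast
qed

lemma subtree_trans:
  assumes "z \<in> subtree y" and "y \<in> subtree x"
  shows "z \<in> subtree x"
proof -
  obtain j k where "(p ^^ j) z = y" and "(p ^^ k) y = x"
    using assms by (auto simp: subtree_def)
  then have "(p ^^ (k + j)) z = x"
    by (simp add: funpow_add)
  then show ?thesis
    unfolding subtree_def by blast
qed

lemma subtree_eq: "subtree x = insert x (\<Union>y \<in> {y. p y = x}. subtree y)"
proof (intro equalityI subsetI)
  fix z assume "z \<in> subtree x"
  then obtain k where k: "(p ^^ k) z = x" by (auto simp: subtree_def)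
  then show "z \<in> insert x (\<Union>y \<in> {y. p y = x}. subtree y)"
    by (cases k) (auto simp: subtree_def)
next
  fix z assume "z \<in> insert x (\<Union>y \<in> {y. p y = x}. subtree y)"
  then show "z \<in> subtree x"
    using self_in_subtree child_in_subtree subtree_trans by blast
qed

lemma finite_subtree: "finite (subtree x)"
proof (induction "lev x" arbitrary: x rule: less_induct)
  case less
  have "finite (subtree y)" if "p y = x" for y
    using that lev_parent[of y] by (intro less) simp
  then show ?case
    by (subst subtree_eq) (auto simp: finite_children)
qed

lemma subtree_funpow:
  assumes "z \<in> subtree x"
  shows "lev z \<le> lev x" and "(p ^^ (lev x - lev z)) z = x"
proof -
  obtain k where k: "(p ^^ k) z = x"
    using assms by (auto simp: subtree_def)
  then have "lev x = lev z + k"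
    using lev_funpow by blast
  with k show "lev z \<le> lev x" and "(p ^^ (lev x - lev z)) z = x"
    by simp_all
qed

lemma lev_less_subtree:
  assumes "z \<in> subtree x" and "z \<noteq> x"
  shows "lev z < lev x"
  using subtree_funpow[OF assms(1)] assms(2) by (cases "lev z = lev x") auto

lemma parent_in_subtree:
  assumes "z \<in> subtree x" and "z \<noteq> x"
  shows "p z \<in> subtree x"
proof -
  obtain k where k: "(p ^^ k) z = x"
    using assms(1) by (auto simp: subtree_def)
  with assms(2) obtain j where "k = Suc j"
    by (cases k) auto
  with k have "(p ^^ j) (p z) = x"
    by (simp add: funpow_Suc_right del: funpow.simps)
  then show ?thesis
    unfolding subtree_def by blast
qed

lemma parent_notin_subtree: "p x \<notin> subtree x"
  using subtree_funpow(1)[of "p x" x] lev_parent[of x] by auto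

lemma grandparent_notin_subtree: "p (p x) \<notin> subtree x"
  using subtree_funpow(1)[of "p (p x)" x] lev_parent[of x] lev_parent[of "p x"] by auto

text \<open>On \<open>subtree x\<close> the vector is fixed by \<open>w x = 1\<close> and \<open>w z = - ratio z * w (p z)\<close>,
  which makes \<open>J w\<close> vanish on \<open>subtree x - {x}\<close>.\<close>

definition test_vec :: "'a \<Rightarrow> real \<Rightarrow> 'a \<Rightarrow> real" where
  "test_vec x s z = (if z \<in> subtree x then (\<Prod>i < lev x - lev z. - ratio ((p ^^ i) z))
                     else if z = p x then s else 0)"

lemma test_vec_self: "test_vec x s x = 1"
  by (simp add: test_vec_def self_in_subtree)

lemma test_vec_parent: "test_vec x s (p x) = s"
  by (simp add: test_vec_def parent_notin_subtree)

lemma test_vec_outside: "z \<notin> subtree x \<Longrightarrow> z \<noteq> p x \<Longrightarrow> test_vec x s z = 0"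
  by (simp add: test_vec_def)

lemma test_vec_step:
  assumes "z \<in> subtree x" and "z \<noteq> x"
  shows "test_vec x s z = - ratio z * test_vec x s (p z)"
proof -
  obtain j where j: "lev x - lev z = Suc j"
    using lev_less_subtree[OF assms] by (cases "lev x - lev z") auto
  then have "lev x - lev (p z) = j"
    using lev_parent[of z] by simp
  moreover have "(\<Prod>i < Suc j. - ratio ((p ^^ i) z)) = - ratio z * (\<Prod>i < j. - ratio ((p ^^ i) (p z)))"
    by (subst prod.lessThan_Suc_shift) (simp add: funpow_Suc_right del: funpow.simps)
  ultimately show ?thesis
    using assms j parent_in_subtree[OF assms] by (simp add: test_vec_def)
qed

lemma real_jacobi_test_vec_below:
  assumes "z \<in> subtree x" and "z \<noteq> x" and "pivot z \<noteq> 0"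
  shows "real_jacobi p lam beta (test_vec x s) z = 0"
proof -
  have "test_vec x s y = - ratio y * test_vec x s z" if "p y = z" for y
  proof -
    have "y \<in> subtree x" "y \<noteq> x"
      using that assms(1) child_in_subtree parent_notin_subtree by blast+
    then show ?thesis
      using test_vec_step that by blast
  qed
  then have "(\<Sum>y | p y = z. lam y * test_vec x s y) = - test_vec x s z * (\<Sum>y | p y = z. lam y * ratio y)"
    by (simp add: sum_distrib_left algebra_simps)
  then have "real_jacobi p lam beta (test_vec x s) z = lam z * test_vec x s (p z) + test_vec x s z * pivot z"
    by (simp add: real_jacobi_def pivot_def algebra_simps)
  then show ?thesis
    using test_vec_step[OF assms(1,2)] ratio_eq[of z] assms(3) by simp
qed

lemma real_jacobi_test_vec_self:
  "real_jacobi p lam beta (test_vec x s) x = lam x * s + pivot x"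
proof -
  have "test_vec x s y = - ratio y" if "p y = x" for y
  proof -
    have "y \<in> subtree x" "y \<noteq> x"
      using that self_in_subtree child_in_subtree parent_neq_self by blast+
    then show ?thesis
      using test_vec_step[of y x s] test_vec_self that by simp
  qed
  then have "(\<Sum>y | p y = x. lam y * test_vec x s y) = - (\<Sum>y | p y = x. lam y * ratio y)"
    by (simp add: sum_negf)
  then show ?thesis
    by (simp add: real_jacobi_def pivot_def test_vec_parent test_vec_self)
qed

lemma real_jacobi_test_vec_parent:
  "real_jacobi p lam beta (test_vec x s) (p x) = beta (p x) * s + lam x"
proof -
  have "test_vec x s y = 0" if "p y = p x" "y \<noteq> x" for y
  proof (rule test_vec_outside)
    show "y \<notin> subtree x"
      using that parent_in_subtree parent_notin_subtree by fastforce
    show "y \<noteq> p x"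
      using that lev_parent[of y] lev_parent[of "p x"] by auto
  qed
  then have "(\<Sum>y | p y = p x. lam y * test_vec x s y) = (\<Sum>y | p y = p x. if y = x then lam x else 0)"
    by (intro sum.cong) (auto simp: test_vec_self)
  also have "\<dots> = lam x"
    by (simp add: sum.delta[OF finite_children])
  finally show ?thesis
    using grandparent_notin_subtree parent_neq_self[of "p x"]
    by (simp add: real_jacobi_def test_vec_parent test_vec_outside)
qed

lemma
  assumes "\<And>z. z \<in> subtree x \<Longrightarrow> z \<noteq> x \<Longrightarrow> pivot z \<noteq> 0"
  shows fin_supp_test_vec: "fin_supp (\<lambda>z. complex_of_real (test_vec x s z))"
    and jform_test_vec: "jform p lam beta (\<lambda>z. complex_of_real (test_vec x s z))
                           = of_real (pivot x + 2 * lam x * s + beta (p x) * s\<^sup>2)"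
proof -
  define S where "S = insert (p x) (subtree x)"
  have "finite S" and outside: "\<And>z. z \<notin> S \<Longrightarrow> test_vec x s z = 0"
    by (auto simp: S_def finite_subtree test_vec_outside)
  then show "fin_supp (\<lambda>z. complex_of_real (test_vec x s z))"
    by (rule fin_supp_of_real)
  let ?q = "\<lambda>z. real_jacobi p lam beta (test_vec x s) z * test_vec x s z"
  have "(\<Sum>z\<in>S. ?q z) = ?q (p x) + (\<Sum>z \<in> subtree x. ?q z)"
    using parent_notin_subtree finite_subtree by (simp add: S_def)
  also have "(\<Sum>z \<in> subtree x. ?q z) = ?q x + (\<Sum>z \<in> subtree x - {x}. ?q z)"
    by (rule sum.remove[OF finite_subtree self_in_subtree])
  also have "(\<Sum>z \<in> subtree x - {x}. ?q z) = 0"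
    using assms real_jacobi_test_vec_below by simp
  finally have "(\<Sum>z\<in>S. ?q z) = pivot x + 2 * lam x * s + beta (p x) * s\<^sup>2"
    by (simp add: real_jacobi_test_vec_parent real_jacobi_test_vec_self test_vec_parent test_vec_self
        algebra_simps power2_eq_square)
  moreover have "jform p lam beta (\<lambda>z. complex_of_real (test_vec x s z)) = of_real (\<Sum>z\<in>S. ?q z)"
    using \<open>finite S\<close> outside by (rule jform_of_real)
  ultimately show "jform p lam beta (\<lambda>z. complex_of_real (test_vec x s z))
                     = of_real (pivot x + 2 * lam x * s + beta (p x) * s\<^sup>2)"
    by simp
qed

end

locale nonneg_jacobi_tree = jacobi_tree +
  assumes jform_nonneg: "\<And>v. fin_supp v \<Longrightarrow> jform p lam beta v \<ge> 0"
begin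

lemma pivot_pos: "pivot x > 0"
proof (induction "lev x" arbitrary: x rule: less_induct)
  case less
  have below: "pivot z \<noteq> 0" if "z \<in> subtree x" "z \<noteq> x" for z
    using less lev_less_subtree[OF that] by fastforce
  then have "0 \<le> jform p lam beta (\<lambda>z. complex_of_real (test_vec x s z))" for s
    by (intro jform_nonneg fin_supp_test_vec)
  then have "pivot x + 2 * lam x * s + beta (p x) * s\<^sup>2 \<ge> 0" for s
    using jform_test_vec[OF below] by (simp add: less_eq_complex_def)
  then show ?case
    using lam_pos by (rule quadratic_nonneg_imp_const_pos[rotated])
qed

lemma ratio_pos: "ratio x > 0"
  using ratio_eq[of x] pivot_pos[of x] lam_pos[of x] by simp

definition ratio_prod :: "'a \<Rightarrow> nat \<Rightarrow> real" where
  "ratio_prod z n = (\<Prod>i<n. ratio ((p ^^ i) z))"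

lemma ratio_prod_pos: "ratio_prod z n > 0"
  unfolding ratio_prod_def by (rule prod_pos) (simp add: ratio_pos)

lemma ratio_prod_add: "ratio_prod z (n + j) = ratio_prod z n * ratio_prod ((p ^^ n) z) j"
proof (induction j)
  case (Suc j)
  have "(p ^^ (n + j)) z = (p ^^ j) ((p ^^ n) z)"
    by (simp add: funpow_add add.commute[of n j])
  with Suc show ?case
    by (simp add: ratio_prod_def)
qed (simp add: ratio_prod_def)

lemma ratio_prod_Suc: "ratio_prod z (Suc n) = ratio z * ratio_prod (p z) n"
  unfolding ratio_prod_def
  by (subst prod.lessThan_Suc_shift) (simp add: funpow_Suc_right del: funpow.simps)

lemma ratio_prod_quotient_le:
  assumes "(p ^^ n) z = (p ^^ k) y" "(p ^^ n') z = (p ^^ k') y" "n \<le> n'"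
  shows "ratio_prod z n / ratio_prod y k = ratio_prod z n' / ratio_prod y k'"
proof -
  have "lev z + n = lev y + k" "lev z + n' = lev y + k'"
    using assms(1,2) lev_funpow by metis+
  moreover define j where "j = n' - n"
  ultimately have "n' = n + j" "k' = k + j"
    using assms(3) by simp_all
  then show ?thesis
    using ratio_prod_pos[of "(p ^^ k) y" j] by (simp add: ratio_prod_add assms(1))
qed

lemma ratio_prod_quotient:
  assumes "(p ^^ n) z = (p ^^ k) y" "(p ^^ n') z = (p ^^ k') y"
  shows "ratio_prod z n / ratio_prod y k = ratio_prod z n' / ratio_prod y k'"
  using ratio_prod_quotient_le[OF assms] ratio_prod_quotient_le[OF assms(2,1)]
  by (cases "n \<le> n'") auto

text \<open>The base point \<open>undefined\<close> is arbitrary; it only fixes the normalisation.\<close>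

definition solution :: "'a \<Rightarrow> real" where
  "solution z = (SOME c. \<exists>n k. (p ^^ n) z = (p ^^ k) undefined
                           \<and> c = ratio_prod z n / ratio_prod undefined k)"

lemma solution_eq:
  assumes "(p ^^ n) z = (p ^^ k) undefined"
  shows "solution z = ratio_prod z n / ratio_prod undefined k"
proof -
  have "\<exists>n k. (p ^^ n) z = (p ^^ k) undefined \<and> solution z = ratio_prod z n / ratio_prod undefined k"
    unfolding solution_def by (rule someI_ex) (use assms in blast)
  then show ?thesis
    using ratio_prod_quotient[OF assms] by auto
qed

lemma solution_pos: "solution z > 0"
proof -
  obtain n k where "(p ^^ n) z = (p ^^ k) undefined"
    using common_ancestor by blast
  then show ?thesis
    using ratio_prod_pos by (simp add: solution_eq)
qed

lemma solution_parent: "solution z = ratio z * solution (p z)"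
proof -
  obtain n k where n: "(p ^^ n) (p z) = (p ^^ k) undefined"
    using common_ancestor by blast
  then have "(p ^^ Suc n) z = (p ^^ k) undefined"
    by (simp add: funpow_Suc_right del: funpow.simps)
  then have "solution z = ratio_prod z (Suc n) / ratio_prod undefined k"
    by (rule solution_eq)
  then show ?thesis
    using solution_eq[OF n] by (simp add: ratio_prod_Suc)
qed

lemma solution_eqn:
  "beta x * solution x = lam x * solution (p x) + (\<Sum>y | p y = x. lam y * solution y)"
proof -
  have "beta x * ratio x = lam x + ratio x * (\<Sum>y | p y = x. lam y * ratio y)"
    using ratio_eq[of x] pivot_pos[of x] by (simp add: pivot_def field_simps)
  then have "beta x * ratio x * solution (p x)
               = (lam x + ratio x * (\<Sum>y | p y = x. lam y * ratio y)) * solution (p x)"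
    by simp
  then have "beta x * solution x = lam x * solution (p x) + solution x * (\<Sum>y | p y = x. lam y * ratio y)"
    using solution_parent[of x] by (simp add: algebra_simps)
  also have "solution x * (\<Sum>y | p y = x. lam y * ratio y) = (\<Sum>y | p y = x. lam y * solution y)"
    unfolding sum_distrib_left
  proof (intro sum.cong)
    fix y assume "y \<in> {y. p y = x}"
    then show "solution x * (lam y * ratio y) = lam y * solution y"
      using solution_parent[of y] by simp
  qed simp
  finally show ?thesis .
qed

end

theorem theorem7:
  fixes p :: "'a \<Rightarrow> 'a" and lev :: "'a \<Rightarrow> nat" and lam beta :: "'a \<Rightarrow> real"
  assumes tree: "level_tree p lev"
    and lam_pos: "\<forall>x. lam x > 0"
  shows "((\<exists>m :: 'a \<Rightarrow> real. (\<forall>x. m x > 0) \<and>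
            (\<forall>x. beta x * m x \<ge> lam x * m (p x) + (\<Sum>y\<in>{y. p y = x}. lam y * m y)))
          \<longrightarrow> (\<forall>v. fin_supp v \<longrightarrow> jform p lam beta v \<ge> 0))
       \<and> ((\<forall>v. fin_supp v \<longrightarrow> jform p lam beta v \<ge> 0)
          \<longrightarrow> (\<exists>m :: 'a \<Rightarrow> real. (\<forall>x. m x > 0) \<and>
            (\<forall>x. beta x * m x = lam x * m (p x) + (\<Sum>y\<in>{y. p y = x}. lam y * m y))))"
proof -
  interpret jacobi_tree p lev lam beta
    using tree lam_pos by unfold_locales auto
  show ?thesis
  proof (intro conjI impI allI)
    fix v :: "'a \<Rightarrow> complex"
    assume "\<exists>m. (\<forall>x. m x > 0) \<and> (\<forall>x. beta x * m x \<ge> lam x * m (p x) + (\<Sum>y | p y = x. lam y * m y))"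
      and "fin_supp v"
    then obtain m where "\<forall>x. m x > 0"
        "\<forall>x. beta x * m x \<ge> lam x * m (p x) + (\<Sum>y | p y = x. lam y * m y)"
      by blast
    with \<open>fin_supp v\<close> show "jform p lam beta v \<ge> 0"
      by (intro jform_nonneg_of_supersolution[where m = m])
         (use lam_pos in \<open>auto simp: finite_children less_imp_le\<close>)
  next
    assume "\<forall>v. fin_supp v \<longrightarrow> jform p lam beta v \<ge> 0"
    then interpret nonneg_jacobi_tree p lev lam beta
      by unfold_locales auto
    show "\<exists>m. (\<forall>x. m x > 0) \<and> (\<forall>x. beta x * m x = lam x * m (p x) + (\<Sum>y | p y = x. lam y * m y))"
      using solution_pos solution_eqn by blast
  qed
qed

end
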